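(* Let $X$ and $Y$ be compact metric spaces, with $d$ the metric on $X$. Let $\phi:\mathrm{C}(X)\to \mathrm{M}_n(\mathrm{C}(Y))$ be the diagonal $*$-homomorphism $\phi(f)=\mathrm{diag}(f\circ\lambda_1,\dots,f\circ\lambda_n)$ determined by continuous maps $\lambda_1,\dots,\lambda_n:Y\to X$. Let $x_0\in X$, $f\in \mathrm{C}(X)$ and $\epsilon>0$, and let $\eta>0$ be such that $|f(x)-f(y)|<\epsilon$ whenever $d(x,y)<2\eta$. Suppose $F_1,\dots,F_m$ ($m\le n$) are nonempty closed subsets of $Y$ such that $d(\lambda_i(y),x_0)<\eta$ whenever $y\in F_i$. Then there exist a unitary $u\in \mathrm{M}_m(\mathrm{C}(Y))\oplus 1_{n-m}$ and an element $b\in \mathrm{M}_{m-1}(\mathrm{C}(Y))$ such that for every $y\in\bigcup_{i=1}^m F_i$, \[ \big\| u(y)\phi(f)(y)u^*(y)-\mathrm{diag}\big(f(x_0),\,b(y),\,f(\lambda_{m+1}(y)),\dots,f(\lambda_n(y))\big)\big\|<2\epsilon \] (if $m=1$ there is no $b$ block).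
   Context: $\mathrm{M}_m(\mathrm{C}(Y))\oplus 1_{n-m}$ denotes the set of $n\times n$ matrices of the form $\begin{pmatrix} a&0\\0&1_{n-m}\end{pmatrix}$ with $a\in\mathrm{M}_m(\mathrm{C}(Y))$. *)

theory Defs
  imports "HOL-Analysis.Analysis"
begin

text \<open>Complex n x n matrices are represented as functions nat => nat => complex,
  of which only the entries with indices < n are relevant (indices are 0-based).\<close>

type_synonym cmat = "nat \<Rightarrow> nat \<Rightarrow> complex"

definition mat_mul :: "nat \<Rightarrow> cmat \<Rightarrow> cmat \<Rightarrow> cmat" where
  "mat_mul n A B = (\<lambda>i j. \<Sum>k<n. A i k * B k j)"

definition mat_adj :: "cmat \<Rightarrow> cmat" where
  "mat_adj A = (\<lambda>i j. cnj (A j i))"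

definition mat_id :: cmat where
  "mat_id = (\<lambda>i j. if i = j then 1 else 0)"

definition mat_diff :: "cmat \<Rightarrow> cmat \<Rightarrow> cmat" where
  "mat_diff A B = (\<lambda>i j. A i j - B i j)"

definition mat_eq :: "nat \<Rightarrow> cmat \<Rightarrow> cmat \<Rightarrow> bool" where
  "mat_eq n A B \<longleftrightarrow> (\<forall>i<n. \<forall>j<n. A i j = B i j)"

definition unitary_mat :: "nat \<Rightarrow> cmat \<Rightarrow> bool" where
  "unitary_mat n U \<longleftrightarrow> mat_eq n (mat_mul n U (mat_adj U)) mat_id
                      \<and> mat_eq n (mat_mul n (mat_adj U) U) mat_id"

definition vec_norm :: "nat \<Rightarrow> (nat \<Rightarrow> complex) \<Rightarrow> real" where
  "vec_norm n v = L2_set (\<lambda>i. cmod (v i)) {..<n}"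

definition mat_vec :: "nat \<Rightarrow> cmat \<Rightarrow> (nat \<Rightarrow> complex) \<Rightarrow> (nat \<Rightarrow> complex)" where
  "mat_vec n A v = (\<lambda>i. \<Sum>k<n. A i k * v k)"

definition mat_norm :: "nat \<Rightarrow> cmat \<Rightarrow> real" where
  "mat_norm n A = Sup {vec_norm n (mat_vec n A v) | v. vec_norm n v \<le> 1}"

definition diag_hom :: "(nat \<Rightarrow> 'b \<Rightarrow> 'a) \<Rightarrow> ('a \<Rightarrow> complex) \<Rightarrow> 'b \<Rightarrow> cmat" where
  "diag_hom lam f y = (\<lambda>i j. if i = j then f (lam i y) else 0)"

text \<open>The block matrix diag(c, b, f(lambda_{m+1} y), ..., f(lambda_n y)) with b of size m-1
  (0-based: entry (0,0) is c, entries (1+i,1+j) for i,j < m-1 are b i j,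
  entries (k,k) for m <= k are d k, everything else 0).\<close>

definition block_diag :: "nat \<Rightarrow> complex \<Rightarrow> cmat \<Rightarrow> (nat \<Rightarrow> complex) \<Rightarrow> cmat" where
  "block_diag m c b d = (\<lambda>i j.
     if i = 0 \<and> j = 0 then c
     else if 1 \<le> i \<and> i < m \<and> 1 \<le> j \<and> j < m then b (i - 1) (j - 1)
     else if m \<le> i \<and> i = j then d i
     else 0)"

end

theory Submission
  imports Defs
begin

text \<open>On \<open>K = F 0 \<union> ... \<union> F (m - 1)\<close> some \<open>f (lam k y)\<close> with \<open>k < m\<close> is \<open>\<epsilon>\<close>-close to \<open>f x0\<close>,
  so the numbers \<open>max 0 (\<epsilon> - |f (lam k y) - f x0|)\<close> normalise to a continuous probability
  vector \<open>p y\<close> supported on such indices. Let \<open>u y\<close> be the real symmetric reflection of the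
  first \<open>m\<close> coordinates exchanging \<open>e\<^sub>0\<close> with the unit vector \<open>w = (sqrt (p k y))\<^sub>k\<close>.
  Since \<open>u y\<close> preserves that block, \<open>u \<phi>(f) u\<^sup>*\<close> differs from
  \<open>diag(f x0, b, f (lam m y), ...)\<close> only in the first row and column, and there by
  \<open>u ((f (lam k y) - f x0) w\<^sub>k)\<^sub>k\<close>, whose norm is \<open>sqrt (\<Sum>k. p k y |f (lam k y) - f x0|\<^sup>2) < \<epsilon>\<close>.
  A matrix supported on its first row and column has norm at most twice the norm of that row.\<close>

lemma vec_norm_cong: "(\<And>i. i < n \<Longrightarrow> a i = b i) \<Longrightarrow> vec_norm n a = vec_norm n b"
  unfolding vec_norm_def by (rule L2_set_cong) auto

lemma vec_norm_add_le: "vec_norm n (\<lambda>i. a i + b i) \<le> vec_norm n a + vec_norm n b"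
proof -
  have "vec_norm n (\<lambda>i. a i + b i) \<le> L2_set (\<lambda>i. cmod (a i) + cmod (b i)) {..<n}"
    unfolding vec_norm_def by (rule L2_set_mono) (auto intro: norm_triangle_ineq)
  also have "\<dots> \<le> vec_norm n a + vec_norm n b"
    unfolding vec_norm_def by (rule L2_set_triangle_ineq)
  finally show ?thesis .
qed

lemma vec_norm_mult_const: "vec_norm n (\<lambda>i. a i * c) = vec_norm n a * cmod c"
  unfolding vec_norm_def by (simp add: L2_set_left_distrib norm_mult)

lemma cmod_sum_mult_le_vec_norm: "cmod (\<Sum>j<n. a j * v j) \<le> vec_norm n a * vec_norm n v"
proof -
  have "cmod (\<Sum>j<n. a j * v j) \<le> (\<Sum>j<n. \<bar>cmod (a j)\<bar> * \<bar>cmod (v j)\<bar>)"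
    by (rule order_trans[OF norm_sum]) (simp add: norm_mult)
  also have "\<dots> \<le> vec_norm n a * vec_norm n v"
    unfolding vec_norm_def by (rule L2_set_mult_ineq)
  finally show ?thesis .
qed

lemma cmod_le_vec_norm: "i < n \<Longrightarrow> cmod (v i) \<le> vec_norm n v"
  unfolding vec_norm_def by (rule member_le_L2_set) auto

lemma vec_norm_unit_first:
  assumes "0 < n"
  shows "vec_norm n (\<lambda>i. if i = 0 then c else 0) = cmod c"
proof -
  have "(\<Sum>i<n. (cmod (if i = 0 then c else 0))\<^sup>2) = (\<Sum>i<n. if i = 0 then (cmod c)\<^sup>2 else 0)"
    by (rule sum.cong) auto
  also have "\<dots> = (cmod c)\<^sup>2" using assms by (simp add: sum.delta)
  finally show ?thesis unfolding vec_norm_def L2_set_def by simp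
qed

lemma vec_norm_drop_first_le: "vec_norm n (\<lambda>i. if i = 0 then 0 else a i) \<le> vec_norm n a"
  unfolding vec_norm_def by (rule L2_set_mono) auto

lemma vec_norm_real_orthogonal:
  fixes A :: "nat \<Rightarrow> nat \<Rightarrow> real"
  assumes orth: "\<And>k l. k < n \<Longrightarrow> l < n \<Longrightarrow> (\<Sum>i<n. A i k * A i l) = (if k = l then 1 else 0)"
  shows "vec_norm n (\<lambda>i. \<Sum>l<n. of_real (A i l) * z l) = vec_norm n z"
proof -
  have "complex_of_real (\<Sum>i<n. (cmod (\<Sum>l<n. of_real (A i l) * z l))\<^sup>2)
      = (\<Sum>i<n. (\<Sum>l<n. of_real (A i l) * z l) * (\<Sum>k<n. of_real (A i k) * cnj (z k)))"
    unfolding of_real_sum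
    by (rule sum.cong[OF refl])
      (simp only: complex_norm_square cnj_sum complex_cnj_mult complex_cnj_complex_of_real)
  also have "\<dots> = (\<Sum>i<n. \<Sum>k<n. \<Sum>l<n. z l * cnj (z k) * of_real (A i l * A i k))"
    by (simp add: sum_distrib_left sum_distrib_right mult_ac)
  also have "\<dots> = (\<Sum>k<n. \<Sum>l<n. \<Sum>i<n. z l * cnj (z k) * of_real (A i l * A i k))"
    by (subst sum.swap) (rule sum.cong[OF refl], rule sum.swap)
  also have "\<dots> = (\<Sum>k<n. \<Sum>l<n. z l * cnj (z k) * of_real (\<Sum>i<n. A i l * A i k))"
    by (simp add: sum_distrib_left of_real_sum)
  also have "\<dots> = (\<Sum>k<n. \<Sum>l<n. if l = k then z l * cnj (z k) else 0)"
    by (intro sum.cong refl) (simp add: orth)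
  also have "\<dots> = complex_of_real (\<Sum>l<n. (cmod (z l))\<^sup>2)"
    unfolding of_real_sum by (simp add: sum.delta complex_norm_square[symmetric])
  finally have "(\<Sum>i<n. (cmod (\<Sum>l<n. of_real (A i l) * z l))\<^sup>2) = (\<Sum>l<n. (cmod (z l))\<^sup>2)"
    using of_real_eq_iff by blast
  then show ?thesis unfolding vec_norm_def L2_set_def by simp
qed

lemma mat_norm_le:
  assumes "\<And>v. vec_norm n v \<le> 1 \<Longrightarrow> vec_norm n (mat_vec n A v) \<le> K"
  shows "mat_norm n A \<le> K"
  unfolding mat_norm_def
proof (rule cSup_least)
  have "vec_norm n (\<lambda>_. 0) \<le> 1" by (simp add: vec_norm_def L2_set_def)
  then show "{vec_norm n (mat_vec n A v) |v. vec_norm n v \<le> 1} \<noteq> {}" by blast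
qed (use assms in auto)

lemma mat_norm_first_row_col_le:
  assumes n_pos: "0 < n"
    and N: "\<And>i j. i < n \<Longrightarrow> j < n \<Longrightarrow> N i j = (if i = 0 then c j else if j = 0 then c i else 0)"
  shows "mat_norm n N \<le> 2 * vec_norm n c"
proof (rule mat_norm_le)
  fix v assume v: "vec_norm n v \<le> 1"
  define row where "row = (\<lambda>i::nat. if i = 0 then (\<Sum>j<n. c j * v j) else 0)"
  define col where "col = (\<lambda>i::nat. if i = 0 then 0 else c i * v 0)"
  have "mat_vec n N v i = row i + col i" if "i < n" for i
  proof (cases "i = 0")
    case True
    then show ?thesis using N that by (simp add: mat_vec_def row_def col_def)
  next
    case False
    have "mat_vec n N v i = (\<Sum>j<n. if j = 0 then c i * v j else 0)"
      unfolding mat_vec_def by (rule sum.cong) (use N that False in auto)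
    then show ?thesis using n_pos False by (simp add: row_def col_def)
  qed
  then have "vec_norm n (mat_vec n N v) \<le> vec_norm n row + vec_norm n col"
    using vec_norm_cong[of n "mat_vec n N v"] vec_norm_add_le by metis
  moreover have "vec_norm n row \<le> vec_norm n c"
  proof -
    have "vec_norm n row = cmod (\<Sum>j<n. c j * v j)"
      unfolding row_def by (rule vec_norm_unit_first[OF n_pos])
    also have "\<dots> \<le> vec_norm n c * vec_norm n v" by (rule cmod_sum_mult_le_vec_norm)
    also have "\<dots> \<le> vec_norm n c" using v by (simp add: mult_left_le vec_norm_def)
    finally show ?thesis .
  qed
  moreover have "vec_norm n col \<le> vec_norm n c"
  proof -
    have "vec_norm n col \<le> vec_norm n (\<lambda>i. c i * v 0)"
      unfolding col_def by (rule vec_norm_drop_first_le)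
    also have "\<dots> = vec_norm n c * cmod (v 0)" by (rule vec_norm_mult_const)
    also have "\<dots> \<le> vec_norm n c"
      using cmod_le_vec_norm[OF n_pos, of v] v by (simp add: mult_left_le vec_norm_def)
    finally show ?thesis .
  qed
  ultimately show "vec_norm n (mat_vec n N v) \<le> 2 * vec_norm n c" by linarith
qed

definition block_involution :: "nat \<Rightarrow> (nat \<Rightarrow> nat \<Rightarrow> real) \<Rightarrow> bool" where
  "block_involution m U \<longleftrightarrow> (\<forall>i j. U i j = U j i)
     \<and> (\<forall>i j. m \<le> i \<longrightarrow> U i j = (if i = j then 1 else 0))
     \<and> (\<forall>i<m. \<forall>j<m. (\<Sum>k<m. U i k * U k j) = (if i = j then 1 else 0))"

lemma block_involution_sym: "block_involution m U \<Longrightarrow> U i j = U j i"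
  unfolding block_involution_def by blast

lemma block_involution_outside:
  assumes "block_involution m U" "m \<le> i \<or> m \<le> j"
  shows "U i j = (if i = j then 1 else 0)"
  using assms unfolding block_involution_def by metis

lemma block_involution_sum_block:
  assumes U: "block_involution m U"
  shows "(\<Sum>k<m. U i k * U k j) = (if i < m \<and> i = j then 1 else 0)"
proof (cases "i < m \<and> j < m")
  case True
  then have "(\<Sum>k<m. U i k * U k j) = (if i = j then 1 else 0)"
    using U unfolding block_involution_def by blast
  then show ?thesis using True by simp
next
  case False
  then have "(\<Sum>k<m. U i k * U k j) = 0"
    by (intro sum.neutral) (auto simp: block_involution_outside[OF U])
  then show ?thesis using False by auto
qed

lemma block_involution_square:
  assumes U: "block_involution m U" and "m \<le> n" "i < n" "j < n"
  shows "(\<Sum>k<n. U i k * U k j) = (if i = j then 1 else 0)"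
proof (cases "i < m \<and> j < m")
  case True
  have "(\<Sum>k<n. U i k * U k j) = (\<Sum>k<m. U i k * U k j)"
    by (rule sum.mono_neutral_right) (use assms True in \<open>auto simp: block_involution_outside[OF U]\<close>)
  then show ?thesis using True by (simp add: block_involution_sum_block[OF U])
next
  case False
  then consider "m \<le> i" | "m \<le> j" by linarith
  then show ?thesis
  proof cases
    case 1
    then have "(\<Sum>k<n. U i k * U k j) = (\<Sum>k<n. if k = i then U k j else 0)"
      by (intro sum.cong) (auto simp: block_involution_outside[OF U])
    then show ?thesis using 1 assms by (simp add: block_involution_outside[OF U])
  next
    case 2
    then have "(\<Sum>k<n. U i k * U k j) = (\<Sum>k<n. if k = j then U i k else 0)"
      by (intro sum.cong) (auto simp: block_involution_outside[OF U])
    then show ?thesis using 2 assms by (simp add: block_involution_outside[OF U])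
  qed
qed

lemma unitary_mat_of_block_involution:
  assumes U: "block_involution m U" and "m \<le> n"
  shows "unitary_mat n (\<lambda>i j. of_real (U i j))"
proof -
  let ?A = "\<lambda>i j. complex_of_real (U i j)"
  have "mat_mul n ?A (mat_adj ?A) i j = mat_id i j \<and> mat_mul n (mat_adj ?A) ?A i j = mat_id i j"
    if "i < n" "j < n" for i j
  proof -
    have "mat_mul n ?A (mat_adj ?A) i j = of_real (\<Sum>k<n. U i k * U k j)"
      "mat_mul n (mat_adj ?A) ?A i j = of_real (\<Sum>k<n. U i k * U k j)"
      unfolding mat_mul_def mat_adj_def of_real_sum
      by (rule sum.cong; simp add: block_involution_sym[OF U, of j] block_involution_sym[OF U, of _ i])+
    then show ?thesis using block_involution_square[OF assms that] by (simp add: mat_id_def)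
  qed
  then show ?thesis unfolding unitary_mat_def mat_eq_def by simp
qed

definition real_conj_diag :: "nat \<Rightarrow> (nat \<Rightarrow> nat \<Rightarrow> real) \<Rightarrow> (nat \<Rightarrow> complex) \<Rightarrow> cmat" where
  "real_conj_diag n U g = (\<lambda>i j. \<Sum>l<n. of_real (U i l) * g l * of_real (U l j))"

lemma conj_diag_hom_eq_real_conj_diag:
  assumes sym: "\<And>i j. U i j = U j i"
  shows "mat_mul n (mat_mul n (\<lambda>i j. of_real (U i j)) (diag_hom lam f y)) (mat_adj (\<lambda>i j. of_real (U i j)))
    = real_conj_diag n U (\<lambda>k. f (lam k y))"
proof (intro ext)
  fix i j
  have "mat_mul n (mat_mul n (\<lambda>i j. of_real (U i j)) (diag_hom lam f y)) (mat_adj (\<lambda>i j. of_real (U i j))) i j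
     = (\<Sum>l<n. (\<Sum>k<n. if k = l then of_real (U i k) * f (lam k y) else 0) * of_real (U l j))"
    unfolding mat_mul_def mat_adj_def diag_hom_def
    by (rule sum.cong[OF refl]) (simp add: sym[of j] if_distrib cong: if_cong)
  also have "\<dots> = real_conj_diag n U (\<lambda>k. f (lam k y)) i j"
    by (simp add: real_conj_diag_def sum.delta')
  finally show "mat_mul n (mat_mul n (\<lambda>i j. of_real (U i j)) (diag_hom lam f y))
      (mat_adj (\<lambda>i j. of_real (U i j))) i j = real_conj_diag n U (\<lambda>k. f (lam k y)) i j" .
qed

lemma real_conj_diag_minus_block_diag:
  fixes g :: "nat \<Rightarrow> complex" and c :: complex
  assumes U: "block_involution m U" and m: "0 < m" "m \<le> n" and ij: "i < n" "j < n"
  defines "T \<equiv> real_conj_diag n U g"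
    and "H \<equiv> real_conj_diag n U (\<lambda>l. g l - (if l < m then c else 0))"
  shows "mat_diff T (block_diag m c (\<lambda>i j. T (Suc i) (Suc j)) g) i j
    = (if i = 0 then H j 0 else if j = 0 then H i 0 else 0)"
proof -
  note out = block_involution_outside[OF U]
  have T_split: "T i j = (if i < m \<and> i = j then c else 0) + H i j" for i j
  proof -
    have "T i j = (\<Sum>l<n. of_real (U i l) * (if l < m then c else 0) * of_real (U l j)) + H i j"
      unfolding T_def H_def real_conj_diag_def
      by (simp add: algebra_simps sum.distrib[symmetric])
    also have "(\<Sum>l<n. of_real (U i l) * (if l < m then c else 0) * of_real (U l j))
        = c * of_real (\<Sum>l<m. U i l * U l j)"
      unfolding of_real_sum sum_distrib_left
      by (rule sum.mono_neutral_cong_right) (use m in auto)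
    finally show ?thesis by (simp add: block_involution_sum_block[OF U])
  qed
  have H_outside: "H i j = (if i = j then g i else 0)" if "m \<le> i \<or> m \<le> j" "i < n" "j < n" for i j
  proof -
    have "H i j = (\<Sum>l<n. if l = i then (if i = j then g i - (if i < m then c else 0) else 0) else 0)"
      unfolding H_def real_conj_diag_def
      by (rule sum.cong) (use that in \<open>auto simp: out\<close>)
    then show ?thesis using that by (auto simp: sum.delta')
  qed
  have H_sym: "H i j = H j i" for i j
    unfolding H_def real_conj_diag_def
    by (rule sum.cong) (auto simp: block_involution_sym[OF U, of _ i] block_involution_sym[OF U, of _ j])
  consider "i = 0" | "j = 0" "i \<noteq> 0" | "i \<noteq> 0" "j \<noteq> 0" "i < m" "j < m"
    | "i \<noteq> 0" "j \<noteq> 0" "m \<le> i \<or> m \<le> j"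
    by linarith
  then show ?thesis
  proof cases
    case 1
    then show ?thesis using m T_split[of 0 j] H_sym[of 0 j] by (simp add: mat_diff_def block_diag_def)
  next
    case 2
    then show ?thesis using m T_split[of i 0] by (simp add: mat_diff_def block_diag_def)
  next
    case 3
    then show ?thesis by (simp add: mat_diff_def block_diag_def)
  next
    case 4
    then show ?thesis using m ij T_split[of i j] H_outside[OF 4(3) ij]
      by (auto simp: mat_diff_def block_diag_def)
  qed
qed

lemma mat_norm_real_conj_diag_minus_block_diag_le:
  assumes U: "block_involution m U" and m: "0 < m" "m \<le> n"
  shows "mat_norm n (mat_diff (real_conj_diag n U g)
      (block_diag m c (\<lambda>i j. real_conj_diag n U g (Suc i) (Suc j)) g))
    \<le> 2 * vec_norm n (\<lambda>l. (g l - (if l < m then c else 0)) * of_real (U l 0))"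
proof -
  define h where "h = (\<lambda>l. g l - (if l < m then c else 0))"
  have "mat_norm n (mat_diff (real_conj_diag n U g)
      (block_diag m c (\<lambda>i j. real_conj_diag n U g (Suc i) (Suc j)) g))
    \<le> 2 * vec_norm n (\<lambda>i. real_conj_diag n U h i 0)"
    using m real_conj_diag_minus_block_diag[OF U m]
    by (intro mat_norm_first_row_col_le) (auto simp: h_def)
  also have "vec_norm n (\<lambda>i. real_conj_diag n U h i 0)
      = vec_norm n (\<lambda>i. \<Sum>l<n. of_real (U i l) * (h l * of_real (U l 0)))"
    unfolding real_conj_diag_def by (simp add: mult.assoc)
  also have "\<dots> = vec_norm n (\<lambda>l. h l * of_real (U l 0))"
    by (rule vec_norm_real_orthogonal)
      (use block_involution_square[OF U m(2)] in \<open>simp add: block_involution_sym[OF U, of _ k for k]\<close>)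
  finally show ?thesis by (simp add: h_def)
qed

text \<open>For a unit vector \<open>w\<close> with \<open>w 0 \<ge> 0\<close> put \<open>v = w + e\<^sub>0\<close>, so that \<open>\<parallel>v\<parallel>\<^sup>2 = 2 (1 + w 0)\<close>.
  On the first \<open>m\<close> coordinates the matrix below is \<open>2 v v\<^sup>T / \<parallel>v\<parallel>\<^sup>2 - I\<close>, minus the Householder
  reflection along \<open>v\<close>; it exchanges \<open>e\<^sub>0\<close> and \<open>w\<close>.\<close>

definition householder :: "nat \<Rightarrow> (nat \<Rightarrow> real) \<Rightarrow> nat \<Rightarrow> nat \<Rightarrow> real" where
  "householder m w i j =
     (if i < m \<and> j < m
      then (w i + (if i = 0 then 1 else 0)) * (w j + (if j = 0 then 1 else 0)) / (1 + w 0)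
           - (if i = j then 1 else 0)
      else (if i = j then 1 else 0))"

lemma householder_first_col:
  assumes "0 < m" "0 \<le> w 0"
  shows "householder m w l 0 = (if l < m then w l else 0)"
  using assms by (auto simp: householder_def field_simps)

lemma householder_block_involution:
  assumes w_unit: "(\<Sum>k<m. (w k)\<^sup>2) = 1" and w0: "0 \<le> w 0"
  shows "block_involution m (householder m w)"
proof -
  define v where "v k = w k + (if k = 0 then 1 else 0)" for k
  define \<alpha> where "\<alpha> = 1 + w 0"
  have m_pos: "0 < m" using w_unit by (cases m) auto
  have \<alpha>_pos: "\<alpha> > 0" using w0 by (simp add: \<alpha>_def)
  have H: "householder m w i j = (if i < m \<and> j < m then v i * v j / \<alpha> - (if i = j then 1 else 0)
      else (if i = j then 1 else 0))" for i j
    unfolding householder_def v_def \<alpha>_def by simp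
  have v_norm: "(\<Sum>k<m. (v k)\<^sup>2) = 2 * \<alpha>"
  proof -
    have "(\<Sum>k<m. (v k)\<^sup>2) = (\<Sum>k<m. (w k)\<^sup>2 + (if k = 0 then 2 * w k + 1 else 0))"
      by (rule sum.cong) (auto simp: v_def power2_eq_square algebra_simps)
    also have "\<dots> = 2 * \<alpha>" using m_pos by (simp add: sum.distrib w_unit \<alpha>_def)
    finally show ?thesis .
  qed
  have "(\<Sum>k<m. householder m w i k * householder m w k j) = (if i = j then 1 else 0)"
    if ij: "i < m" "j < m" for i j
  proof -
    have "(\<Sum>k<m. householder m w i k * householder m w k j)
        = (\<Sum>k<m. (v i * v j / \<alpha>\<^sup>2) * (v k)\<^sup>2 - (if i = k then v k * v j / \<alpha> else 0)
            - (if k = j then v i * v k / \<alpha> else 0) + (if k = i then (if i = j then 1 else 0) else 0))"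
      by (rule sum.cong) (use ij \<alpha>_pos in \<open>auto simp: H power2_eq_square field_simps\<close>)
    also have "\<dots> = (v i * v j / \<alpha>\<^sup>2) * (\<Sum>k<m. (v k)\<^sup>2) - 2 * (v i * v j / \<alpha>)
        + (if i = j then 1 else 0)"
      using ij by (simp add: sum.distrib sum_subtractf sum_distrib_left sum.delta sum.delta')
    also have "\<dots> = (if i = j then 1 else 0)"
      using \<alpha>_pos unfolding v_norm by (simp add: field_simps power2_eq_square)
    finally show ?thesis .
  qed
  then show ?thesis
    unfolding block_involution_def by (auto simp: H mult.commute)
qed

lemma continuous_on_householder:
  assumes "\<And>k. k < m \<Longrightarrow> continuous_on S (\<lambda>y. w y k)" and "\<And>y. y \<in> S \<Longrightarrow> 0 \<le> w y 0"
  shows "continuous_on S (\<lambda>y. householder m (w y) i j)"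
proof (cases "i < m \<and> j < m")
  case True
  then have eq: "(\<lambda>y. householder m (w y) i j) = (\<lambda>y. (w y i + (if i = 0 then 1 else 0))
      * (w y j + (if j = 0 then 1 else 0)) / (1 + w y 0) - (if i = j then 1 else 0))"
    by (simp add: householder_def)
  have "1 + w y 0 \<noteq> 0" if "y \<in> S" for y using assms(2)[OF that] by linarith
  then show ?thesis unfolding eq
    using True assms(1)[of i] assms(1)[of j] assms(1)[of 0] by (auto intro!: continuous_intros)
next
  case False
  then have "(\<lambda>y. householder m (w y) i j) = (\<lambda>y. if i = j then 1 else 0)"
    by (auto simp: householder_def)
  then show ?thesis using continuous_on_const by metis
qed

lemma mat_norm_householder_conj_diag_le:
  assumes w_unit: "(\<Sum>k<m. (w k)\<^sup>2) = 1" and w0: "0 \<le> w 0" and "m \<le> n"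
  shows "mat_norm n (mat_diff (real_conj_diag n (householder m w) g)
      (block_diag m c (\<lambda>i j. real_conj_diag n (householder m w) g (Suc i) (Suc j)) g))
    \<le> 2 * sqrt (\<Sum>k<m. (cmod (g k - c))\<^sup>2 * (w k)\<^sup>2)"
proof -
  have m_pos: "0 < m" using w_unit by (cases m) auto
  have "mat_norm n (mat_diff (real_conj_diag n (householder m w) g)
      (block_diag m c (\<lambda>i j. real_conj_diag n (householder m w) g (Suc i) (Suc j)) g))
    \<le> 2 * vec_norm n (\<lambda>l. (g l - (if l < m then c else 0)) * of_real (householder m w l 0))"
    using m_pos \<open>m \<le> n\<close>
    by (intro mat_norm_real_conj_diag_minus_block_diag_le householder_block_involution w_unit w0) auto
  also have "vec_norm n (\<lambda>l. (g l - (if l < m then c else 0)) * of_real (householder m w l 0))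
      = sqrt (\<Sum>k<m. (cmod (g k - c))\<^sup>2 * (w k)\<^sup>2)"
    unfolding vec_norm_def L2_set_def
    by (intro arg_cong[where f = sqrt] sum.mono_neutral_cong_right)
      (use \<open>m \<le> n\<close> in \<open>auto simp: householder_first_col[of m w, OF m_pos w0] norm_mult power_mult_distrib\<close>)
  finally show ?thesis by simp
qed

lemma sum_weighted_less:
  fixes a p :: "nat \<Rightarrow> real"
  assumes p_nonneg: "\<And>k. k < m \<Longrightarrow> 0 \<le> p k" and p_sum: "(\<Sum>k<m. p k) = 1"
    and a_less: "\<And>k. k < m \<Longrightarrow> 0 < p k \<Longrightarrow> a k < c"
  shows "(\<Sum>k<m. a k * p k) < c"
proof -
  obtain k0 where k0: "k0 < m" "0 < p k0"
    using p_sum p_nonneg by (metis lessThan_iff less_eq_real_def sum.neutral zero_neq_one)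
  have "(\<Sum>k<m. a k * p k) < (\<Sum>k<m. c * p k)"
  proof (rule sum_strict_mono_ex1)
    show "\<forall>k\<in>{..<m}. a k * p k \<le> c * p k"
      using a_less p_nonneg by (metis lessThan_iff less_eq_real_def mult_right_mono mult_zero_right)
    show "\<exists>k\<in>{..<m}. a k * p k < c * p k"
      using k0 a_less[OF k0] by (intro bexI[of _ k0]) (simp_all add: mult_strict_right_mono)
  qed simp
  then show ?thesis by (simp add: p_sum sum_distrib_left[symmetric])
qed

lemma mat_norm_householder_conj_diag_less:
  assumes "m \<le> n" and "0 < \<epsilon>"
    and p_nonneg: "\<And>k. k < m \<Longrightarrow> 0 \<le> p k" and p_sum: "(\<Sum>k<m. p k) = 1"
    and near: "\<And>k. k < m \<Longrightarrow> 0 < p k \<Longrightarrow> cmod (g k - c) < \<epsilon>"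
  defines "U \<equiv> householder m (\<lambda>k. sqrt (p k))"
  shows "mat_norm n (mat_diff (real_conj_diag n U g)
      (block_diag m c (\<lambda>i j. real_conj_diag n U g (Suc i) (Suc j)) g)) < 2 * \<epsilon>"
proof -
  have m_pos: "0 < m" using p_sum by (cases m) auto
  have "(\<Sum>k<m. (cmod (g k - c))\<^sup>2 * p k) < \<epsilon>\<^sup>2"
    using p_nonneg p_sum near by (intro sum_weighted_less) (auto intro!: power_strict_mono)
  then have "2 * sqrt (\<Sum>k<m. (cmod (g k - c))\<^sup>2 * (sqrt (p k))\<^sup>2) < 2 * \<epsilon>"
    using p_nonneg real_sqrt_less_mono[of _ "\<epsilon>\<^sup>2"] \<open>0 < \<epsilon>\<close> by simp
  then show ?thesis
    unfolding U_def
    by (intro le_less_trans[OF mat_norm_householder_conj_diag_le]) (use assms m_pos in simp_all)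
qed

lemma compact_continuous_pos_bounded_below:
  fixes S :: "'b::topological_space \<Rightarrow> real"
  assumes "compact K" "continuous_on K S" "\<And>y. y \<in> K \<Longrightarrow> 0 < S y"
  obtains \<delta> where "0 < \<delta>" "\<And>y. y \<in> K \<Longrightarrow> \<delta> \<le> S y"
proof (cases "K = {}")
  case True
  then show ?thesis using that[of 1] by simp
next
  case False
  then obtain y0 where "y0 \<in> K" "\<And>y. y \<in> K \<Longrightarrow> S y0 \<le> S y"
    using continuous_attains_inf[OF assms(1) False assms(2)] by blast
  then show ?thesis using that[of "S y0"] assms(3) by blast
qed

lemma continuous_normalized_weights:
  fixes s :: "nat \<Rightarrow> 'b::topological_space \<Rightarrow> real"
  assumes K: "compact K" and m_pos: "0 < m"
    and s_cont: "\<And>k. k < m \<Longrightarrow> continuous_on UNIV (s k)"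
    and s_nonneg: "\<And>k y. k < m \<Longrightarrow> 0 \<le> s k y"
    and s_pos: "\<And>y. y \<in> K \<Longrightarrow> \<exists>k<m. 0 < s k y"
  obtains p :: "nat \<Rightarrow> 'b \<Rightarrow> real"
  where "\<And>k. k < m \<Longrightarrow> continuous_on UNIV (p k)"
    and "\<And>k y. k < m \<Longrightarrow> 0 \<le> p k y" and "\<And>y. (\<Sum>k<m. p k y) = 1"
    and "\<And>k y. k < m \<Longrightarrow> y \<in> K \<Longrightarrow> 0 < p k y \<Longrightarrow> 0 < s k y"
proof -
  define S where "S y = (\<Sum>k<m. s k y)" for y
  have S_cont: "continuous_on UNIV S"
    unfolding S_def by (auto intro!: continuous_intros s_cont)
  have s_le_S: "s k y \<le> S y" if "k < m" for k y
    unfolding S_def by (rule member_le_sum) (use that s_nonneg in auto)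
  have "continuous_on K S" using S_cont by (rule continuous_on_subset) simp
  moreover have "0 < S y" if "y \<in> K" for y
    using s_pos[OF that] s_le_S by (meson less_le_trans)
  ultimately obtain \<delta> where \<delta>: "0 < \<delta>" "\<And>y. y \<in> K \<Longrightarrow> \<delta> \<le> S y"
    using compact_continuous_pos_bounded_below[OF K] by blast
  text \<open>Dividing by \<open>max (S y) \<delta>\<close> rather than \<open>S y\<close> keeps the weights continuous where \<open>S\<close>
    vanishes; the missing mass goes to the first weight, and there is none on \<open>K\<close>.\<close>
  define M where "M y = max (S y) \<delta>" for y
  define p where "p k y = s k y / M y + (if k = 0 then 1 - S y / M y else 0)" for k y
  have M_pos: "0 < M y" for y using \<delta>(1) by (simp add: M_def)
  have S_le_M: "S y \<le> M y" for y by (simp add: M_def)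
  show ?thesis
  proof (rule that)
    show "continuous_on UNIV (p k)" if "k < m" for k
    proof -
      have "max (S y) \<delta> \<noteq> 0" for y using M_pos[of y] by (simp add: M_def)
      then show ?thesis
        unfolding p_def[abs_def] M_def using s_cont[OF that] S_cont
        by (cases "k = 0") (auto intro!: continuous_intros)
    qed
    show "0 \<le> p k y" if "k < m" for k y
      using s_nonneg[OF that, of y] M_pos[of y] S_le_M[of y] by (simp add: p_def)
    show "(\<Sum>k<m. p k y) = 1" for y
      using m_pos M_pos[of y]
      by (simp add: p_def sum.distrib sum_divide_distrib[symmetric] S_def[symmetric])
    show "0 < s k y" if "k < m" "y \<in> K" "0 < p k y" for k y
    proof -
      have "M y = S y" using \<delta>(2)[OF that(2)] by (simp add: M_def)
      then have "p k y = s k y / S y" using M_pos[of y] by (simp add: p_def)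
      then show ?thesis using that(3) M_pos[of y] \<open>M y = S y\<close> by (simp add: zero_less_divide_iff)
    qed
  qed
qed

lemma continuous_weights_near_value:
  fixes g :: "nat \<Rightarrow> 'b::topological_space \<Rightarrow> complex"
  assumes K: "compact K" and m_pos: "0 < m"
    and g_cont: "\<And>k. k < m \<Longrightarrow> continuous_on UNIV (g k)"
    and near: "\<And>y. y \<in> K \<Longrightarrow> \<exists>k<m. cmod (g k y - c) < \<epsilon>"
  obtains p :: "nat \<Rightarrow> 'b \<Rightarrow> real"
  where "\<And>k. k < m \<Longrightarrow> continuous_on UNIV (p k)"
    and "\<And>k y. k < m \<Longrightarrow> 0 \<le> p k y" and "\<And>y. (\<Sum>k<m. p k y) = 1"
    and "\<And>k y. k < m \<Longrightarrow> y \<in> K \<Longrightarrow> 0 < p k y \<Longrightarrow> cmod (g k y - c) < \<epsilon>"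
proof -
  define s where "s k y = max 0 (\<epsilon> - cmod (g k y - c))" for k y
  have "continuous_on UNIV (s k)" if "k < m" for k
    unfolding s_def[abs_def] using g_cont[OF that] by (auto intro!: continuous_intros)
  moreover have "\<exists>k<m. 0 < s k y" if "y \<in> K" for y
    using near[OF that] by (auto simp: s_def)
  ultimately obtain p :: "nat \<Rightarrow> 'b \<Rightarrow> real"
    where p: "\<And>k. k < m \<Longrightarrow> continuous_on UNIV (p k)"
      "\<And>k y. k < m \<Longrightarrow> 0 \<le> p k y" "\<And>y. (\<Sum>k<m. p k y) = 1"
      and s_pos: "\<And>k y. k < m \<Longrightarrow> y \<in> K \<Longrightarrow> 0 < p k y \<Longrightarrow> 0 < s k y"
    using continuous_normalized_weights[OF K m_pos, of s] by (auto simp: s_def)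
  have "cmod (g k y - c) < \<epsilon>" if "k < m" "y \<in> K" "0 < p k y" for k y
    using s_pos[OF that] by (simp add: s_def)
  with p show ?thesis by (rule that)
qed

theorem theorem3p1:
  fixes lam :: "nat \<Rightarrow> 'b::metric_space \<Rightarrow> 'a::metric_space"
    and f :: "'a \<Rightarrow> complex" and x0 :: 'a
    and F :: "nat \<Rightarrow> 'b set" and n m :: nat and \<epsilon> \<eta> :: real
  assumes X_compact: "compact (UNIV :: 'a set)"
    and Y_compact: "compact (UNIV :: 'b set)"
    and lam_cont: "\<And>i. i < n \<Longrightarrow> continuous_on UNIV (lam i)"
    and f_cont: "continuous_on UNIV f"
    and eps_pos: "\<epsilon> > 0"
    and eta_pos: "\<eta> > 0"
    and eta: "\<And>x y. dist x y < 2 * \<eta> \<Longrightarrow> cmod (f x - f y) < \<epsilon>"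
    and m_pos: "1 \<le> m" and m_le: "m \<le> n"
    and F_closed: "\<And>i. i < m \<Longrightarrow> closed (F i)"
    and F_nonempty: "\<And>i. i < m \<Longrightarrow> F i \<noteq> {}"
    and F_close: "\<And>i y. i < m \<Longrightarrow> y \<in> F i \<Longrightarrow> dist (lam i y) x0 < \<eta>"
  shows "\<exists>u :: 'b \<Rightarrow> cmat. \<exists>b :: 'b \<Rightarrow> cmat.
      (\<forall>i<n. \<forall>j<n. continuous_on UNIV (\<lambda>y. u y i j))
    \<and> (\<forall>y. unitary_mat n (u y))
    \<and> (\<forall>y. \<forall>i<n. \<forall>j<n. (m \<le> i \<or> m \<le> j) \<longrightarrow> u y i j = mat_id i j)
    \<and> (\<forall>i<m - 1. \<forall>j<m - 1. continuous_on UNIV (\<lambda>y. b y i j))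
    \<and> (\<forall>y \<in> (\<Union>i<m. F i).
         mat_norm n (mat_diff
            (mat_mul n (mat_mul n (u y) (diag_hom lam f y)) (mat_adj (u y)))
            (block_diag m (f x0) (b y) (\<lambda>k. f (lam k y)))) < 2 * \<epsilon>)"
proof -
  let ?g = "\<lambda>y k. f (lam k y)"
  have g_cont: "continuous_on UNIV (\<lambda>y. ?g y k)" if "k < n" for k
    using continuous_on_compose2[OF f_cont lam_cont[OF that]] by auto
  have K_compact: "compact (\<Union>i<m. F i)"
    using compact_Int_closed[OF Y_compact F_closed] by (auto intro!: compact_UN)
  have near: "\<exists>k<m. cmod (?g y k - f x0) < \<epsilon>" if y: "y \<in> (\<Union>i<m. F i)" for y
  proof -
    obtain i where i: "i < m" "y \<in> F i" using y by blast
    have "dist (lam i y) x0 < 2 * \<eta>" using F_close[OF i] eta_pos by simp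
    then show ?thesis using i eta by blast
  qed
  obtain p :: "nat \<Rightarrow> 'b \<Rightarrow> real" where p_cont: "\<And>k. k < m \<Longrightarrow> continuous_on UNIV (p k)"
    and p_nonneg: "\<And>k y. k < m \<Longrightarrow> 0 \<le> p k y" and p_sum: "\<And>y. (\<Sum>k<m. p k y) = 1"
    and p_near: "\<And>k y. k < m \<Longrightarrow> y \<in> (\<Union>i<m. F i) \<Longrightarrow> 0 < p k y \<Longrightarrow> cmod (?g y k - f x0) < \<epsilon>"
    by (rule continuous_weights_near_value[OF K_compact _ _ near]) (use m_pos m_le g_cont in auto)
  define U where "U y = householder m (\<lambda>k. sqrt (p k y))" for y
  have U_inv: "block_involution m (U y)" for y
    unfolding U_def using p_sum p_nonneg m_pos by (intro householder_block_involution) simp_all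
  have U_cont: "continuous_on UNIV (\<lambda>y. U y i j)" for i j
    unfolding U_def
    by (rule continuous_on_householder) (use p_cont p_nonneg m_pos in \<open>auto intro!: continuous_intros\<close>)
  have conj_U: "mat_mul n (mat_mul n (\<lambda>i j. complex_of_real (U y i j)) (diag_hom lam f y))
      (mat_adj (\<lambda>i j. complex_of_real (U y i j))) = real_conj_diag n (U y) (?g y)" for y
    by (rule conj_diag_hom_eq_real_conj_diag) (rule block_involution_sym[OF U_inv])
  show ?thesis
  proof (intro exI conjI allI impI ballI)
    show "continuous_on UNIV (\<lambda>y. complex_of_real (U y i j))" for i j
      by (intro continuous_intros U_cont)
    show "unitary_mat n (\<lambda>i j. complex_of_real (U y i j))" for y
      by (rule unitary_mat_of_block_involution[OF U_inv m_le])
    show "complex_of_real (U y i j) = mat_id i j" if "m \<le> i \<or> m \<le> j" for y i j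
      using block_involution_outside[OF U_inv that] by (simp add: mat_id_def)
    show "continuous_on UNIV (\<lambda>y. real_conj_diag n (U y) (?g y) (Suc i) (Suc j))" for i j
      unfolding real_conj_diag_def by (auto intro!: continuous_intros U_cont g_cont)
    show "mat_norm n (mat_diff (mat_mul n (mat_mul n (\<lambda>i j. complex_of_real (U y i j))
        (diag_hom lam f y)) (mat_adj (\<lambda>i j. complex_of_real (U y i j))))
        (block_diag m (f x0) (\<lambda>i j. real_conj_diag n (U y) (?g y) (Suc i) (Suc j)) (?g y))) < 2 * \<epsilon>"
      if "y \<in> (\<Union>i<m. F i)" for y
      unfolding conj_U unfolding U_def
      using p_nonneg p_sum p_near[OF _ that] m_le eps_pos by (intro mat_norm_householder_conj_diag_less) auto
  qed
qed

end
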